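(* Let $\mathcal{S}\subseteq M^*$ be a fixed domain sequence set and let $L\le2|M|^c$ and $l\ge150c\ln|M|/\ln\ln|M|$ be fixed integers. Let $b$ be a constant and let $k\ge 8(b+1)\frac{\ln|\mathcal{S}|+(c+1)\ln|M|}{\ln l}$. Then a set of $k$ independent uniformly random hash functions $h_1,\dots,h_k:M^*\times I\to\{0,\dots,L-1\}$ is $(L,l)$-good for $\mathcal{S}$ with probability at least $1-2|M|^{-b}$.
   Context: Machines $M$ with standing assumption $|M|\ge32$; $c\ge1$ a constant; $I:=\{1,\dots,|M|^c\}$. A job $j$ has a sequence $\mathrm{seq}(j)\in M^*$ and an identifier $\mathrm{ind}(j)\in I$, identifiers being distinct within a job set. A job set $J$ is $\mathcal{S}$-supported if $\mathrm{seq}(j)\in\mathcal{S}$ for all $j\in J$. $C(J)=\max_m\sum_{j\in J}|\{i:\mathrm{seq}(j)_i=m\}|$, $D(J)=\max_j\mathrm{len}(\mathrm{seq}(j))$. For $h$, $h(j):=h(\mathrm{seq}(j),\mathrm{ind}(j))$ and $\mathrm{virt}(j,i)=h(j)+i$ ($i<\mathrm{len}(\mathrm{seq}(j))$). A bad pattern (for $M,L,l,J$) is a collection of sets $B_{T,m}$, $0\le T<2L$, $m\in M$, of pairs $(j,i)$ with $j\in J$ and $\mathrm{seq}(j)_i=m$, each $j$ appearing at most once overall, $|B_{T,m}|\in\{0\}\cup(l,|J|]$, and $\sum|B_{T,m}|>|J|/2$; it occurs for $h$ if $\mathrm{virt}(j,i)=T$ for all $(j,i)\in B_{T,m}$. $h$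 is $(L,l)$-good for $J$ if no bad pattern occurs for $h$. A set $h_1,\dots,h_k$ is $(L,l)$-good for $\mathcal{S}$ if for every $\mathcal{S}$-supported job set $J$ with $L\ge C(J)+D(J)$, at least one $h_i$ is $(L,l)$-good for $J$. *)

theory Defs
  imports "HOL-Probability.Probability_Mass_Function" "HOL-Library.FuncSet"
begin

text \<open>A job is a pair (seq j, ind j) of a machine sequence and an identifier.\<close>
type_synonym 'm job = "'m list \<times> nat"

definition ids :: "'m set \<Rightarrow> real \<Rightarrow> nat set" where
  "ids M c = {1..nat \<lfloor>real (card M) powr c\<rfloor>}"

definition job_set :: "'m set \<Rightarrow> real \<Rightarrow> 'm job set \<Rightarrow> bool" where
  "job_set M c J \<longleftrightarrow> finite J \<and> (\<forall>j\<in>J. fst j \<in> lists M \<and> snd j \<in> ids M c) \<and> inj_on snd J"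

definition supported :: "'m list set \<Rightarrow> 'm job set \<Rightarrow> bool" where
  "supported S J \<longleftrightarrow> (\<forall>j\<in>J. fst j \<in> S)"

definition congestion :: "'m set \<Rightarrow> 'm job set \<Rightarrow> nat" where
  "congestion M J = Max (insert 0 ((\<lambda>m. \<Sum>j\<in>J. card {i. i < length (fst j) \<and> fst j ! i = m}) ` M))"

definition dilation :: "'m job set \<Rightarrow> nat" where
  "dilation J = Max (insert 0 ((\<lambda>j. length (fst j)) ` J))"

definition virt :: "('m job \<Rightarrow> nat) \<Rightarrow> 'm job \<Rightarrow> nat \<Rightarrow> nat" where
  "virt h j i = h j + i"

definition bad_pattern :: "'m set \<Rightarrow> nat \<Rightarrow> nat \<Rightarrow> 'm job set
    \<Rightarrow> (nat \<Rightarrow> 'm \<Rightarrow> ('m job \<times> nat) set) \<Rightarrow> bool" where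
  "bad_pattern M L l J B \<longleftrightarrow>
     (\<forall>T<2*L. \<forall>m\<in>M. \<forall>(j,i)\<in>B T m. j \<in> J \<and> i < length (fst j) \<and> fst j ! i = m)
   \<and> (\<forall>T1<2*L. \<forall>m1\<in>M. \<forall>T2<2*L. \<forall>m2\<in>M. \<forall>j i1 i2.
        (j,i1) \<in> B T1 m1 \<longrightarrow> (j,i2) \<in> B T2 m2 \<longrightarrow> T1 = T2 \<and> m1 = m2 \<and> i1 = i2)
   \<and> (\<forall>T<2*L. \<forall>m\<in>M. B T m = {} \<or> (l < card (B T m) \<and> card (B T m) \<le> card J))
   \<and> 2 * (\<Sum>T<2*L. \<Sum>m\<in>M. card (B T m)) > card J"

definition occurs :: "'m set \<Rightarrow> nat \<Rightarrow> (nat \<Rightarrow> 'm \<Rightarrow> ('m job \<times> nat) set)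
    \<Rightarrow> ('m job \<Rightarrow> nat) \<Rightarrow> bool" where
  "occurs M L B h \<longleftrightarrow> (\<forall>T<2*L. \<forall>m\<in>M. \<forall>(j,i)\<in>B T m. virt h j i = T)"

definition good_for_jobs :: "'m set \<Rightarrow> nat \<Rightarrow> nat \<Rightarrow> 'm job set \<Rightarrow> ('m job \<Rightarrow> nat) \<Rightarrow> bool" where
  "good_for_jobs M L l J h \<longleftrightarrow> \<not> (\<exists>B. bad_pattern M L l J B \<and> occurs M L B h)"

definition good_family :: "'m set \<Rightarrow> real \<Rightarrow> 'm list set \<Rightarrow> nat \<Rightarrow> nat \<Rightarrow> nat
    \<Rightarrow> (nat \<Rightarrow> 'm job \<Rightarrow> nat) \<Rightarrow> bool" where
  "good_family M c S L l k hs \<longleftrightarrow>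
     (\<forall>J. job_set M c J \<and> supported S J \<and> congestion M J + dilation J \<le> L
          \<longrightarrow> (\<exists>i<k. good_for_jobs M L l J (hs i)))"

text \<open>k independent uniform hash functions, each given by its values on S \<times> I
  (the only values relevant for S-supported job sets).\<close>
definition random_hashes :: "'m set \<Rightarrow> real \<Rightarrow> 'm list set \<Rightarrow> nat \<Rightarrow> nat
    \<Rightarrow> (nat \<Rightarrow> 'm job \<Rightarrow> nat) pmf" where
  "random_hashes M c S L k =
     pmf_of_set (PiE {..<k} (\<lambda>_. PiE (S \<times> ids M c) (\<lambda>_. {..<L})))"

end

theory Submission
  imports Defs
begin

text \<open>A hash function \<open>h\<close> fails for a job set \<open>J\<close> only if some bad pattern occurs. A pattern of
  total size \<open>s > |J|/2\<close> prescribes \<open>h\<close> on \<open>s\<close> distinct jobs, so it occurs with probability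
  \<open>L^(-s)\<close>. Weighting every pattern by \<open>\<mu>^(s - |J|/2) \<ge> 1\<close>, where \<open>\<mu> = l^(1/3)\<close>, turns the union
  bound over patterns into a product over the \<open>2L|M|\<close> cells \<open>(T, m)\<close>. A machine carries at most
  \<open>L\<close> steps and a nonempty cell holds more than \<open>l\<close> of them, so each factor is at most
  \<open>1 + L (e \<mu> / (l + 1))^(l + 1)\<close>, and the lower bound on \<open>l\<close> makes the whole product at most \<open>e\<close>.
  Hence a single hash function fails for \<open>J\<close> with probability at most \<open>l^(-|J|/8)\<close>, and all \<open>k\<close>
  fail with probability at most \<open>a^|J|\<close> for \<open>a = l^(-k/8)\<close>. Summing over the nonempty
  \<open>J \<subseteq> S \<times> I\<close> gives \<open>(1 + a)^(|S||I|) - 1\<close>, which the lower bound on \<open>k\<close> makes at most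
  \<open>2 |M|^(-b)\<close>.\<close>

section \<open>Bad patterns as functions on cells\<close>

definition steps_on :: "'m job set \<Rightarrow> 'm \<Rightarrow> ('m job \<times> nat) set" where
  "steps_on J m = {(j, i). j \<in> J \<and> i < length (fst j) \<and> fst j ! i = m}"

definition cells :: "'m set \<Rightarrow> nat \<Rightarrow> (nat \<times> 'm) set" where
  "cells M L = {..<2 * L} \<times> M"

definition cell_patterns :: "'m job set \<Rightarrow> nat \<Rightarrow> nat \<times> 'm \<Rightarrow> ('m job \<times> nat) set set" where
  "cell_patterns J l q = {Y. Y \<subseteq> steps_on J (snd q) \<and> (Y = {} \<or> l < card Y)}"

definition jobs_disjoint :: "(nat \<times> 'm) set \<Rightarrow> (nat \<times> 'm \<Rightarrow> ('m job \<times> nat) set) \<Rightarrow> bool" where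
  "jobs_disjoint Q \<beta> \<longleftrightarrow>
     (\<forall>q1\<in>Q. \<forall>q2\<in>Q. \<forall>j i1 i2. (j, i1) \<in> \<beta> q1 \<longrightarrow> (j, i2) \<in> \<beta> q2 \<longrightarrow> q1 = q2 \<and> i1 = i2)"

definition pattern_size :: "(nat \<times> 'm) set \<Rightarrow> (nat \<times> 'm \<Rightarrow> ('m job \<times> nat) set) \<Rightarrow> nat" where
  "pattern_size Q \<beta> = (\<Sum>q\<in>Q. card (\<beta> q))"

text \<open>\<open>\<beta> (T, m)\<close> plays the role of \<open>B T m\<close>; indexing by cells makes the tilted sum over all
  patterns a product over cells.\<close>
definition patterns :: "'m set \<Rightarrow> nat \<Rightarrow> nat \<Rightarrow> 'm job set
    \<Rightarrow> (nat \<times> 'm \<Rightarrow> ('m job \<times> nat) set) set" where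
  "patterns M L l J = {\<beta> \<in> PiE (cells M L) (cell_patterns J l).
     jobs_disjoint (cells M L) \<beta> \<and> card J < 2 * pattern_size (cells M L) \<beta>}"

definition pattern_occurs :: "'m set \<Rightarrow> nat \<Rightarrow> (nat \<times> 'm \<Rightarrow> ('m job \<times> nat) set)
    \<Rightarrow> ('m job \<Rightarrow> nat) \<Rightarrow> bool" where
  "pattern_occurs M L \<beta> h \<longleftrightarrow> (\<forall>q\<in>cells M L. \<forall>(j, i)\<in>\<beta> q. h j + i = fst q)"

lemma finite_steps_on: "finite J \<Longrightarrow> finite (steps_on J m)"
  by (rule finite_subset[of _ "Sigma J (\<lambda>j. {..<length (fst j)})"]) (auto simp: steps_on_def)

lemma card_steps_on:
  assumes "finite J"
  shows "card (steps_on J m) = (\<Sum>j\<in>J. card {i. i < length (fst j) \<and> fst j ! i = m})"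
proof -
  have "steps_on J m = Sigma J (\<lambda>j. {i. i < length (fst j) \<and> fst j ! i = m})"
    by (auto simp: steps_on_def)
  then show ?thesis
    using assms by simp
qed

lemma card_steps_on_le_congestion:
  assumes "finite M" "finite J" "m \<in> M"
  shows "card (steps_on J m) \<le> congestion M J"
  unfolding congestion_def card_steps_on[OF assms(2)] using assms(1,3) by (intro Max_ge) auto

lemma finite_cell_patterns: "finite J \<Longrightarrow> finite (cell_patterns J l q)"
  by (rule finite_subset[of _ "Pow (steps_on J (snd q))"])
    (auto simp: cell_patterns_def finite_steps_on)

lemma finite_cells: "finite M \<Longrightarrow> finite (cells M L)"
  by (simp add: cells_def)

lemma card_cells: "card (cells M L) = 2 * L * card M"
  by (simp add: cells_def card_cartesian_product)

lemma finite_patterns: "finite M \<Longrightarrow> finite J \<Longrightarrow> finite (patterns M L l J)"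
  by (rule finite_subset[of _ "PiE (cells M L) (cell_patterns J l)"])
    (auto simp: patterns_def finite_cells finite_cell_patterns intro!: finite_PiE)

lemma not_good_imp_pattern_occurs:
  assumes "\<not> good_for_jobs M L l J h"
  shows "\<exists>\<beta>\<in>patterns M L l J. pattern_occurs M L \<beta> h"
proof -
  from assms obtain B where bad: "bad_pattern M L l J B" and occ: "occurs M L B h"
    unfolding good_for_jobs_def by blast
  define \<beta> where "\<beta> = (\<lambda>q\<in>cells M L. B (fst q) (snd q))"
  have "\<beta> (T, m) \<in> cell_patterns J l (T, m)" if "(T, m) \<in> cells M L" for T m
  proof -
    have "T < 2 * L" "m \<in> M" using that by (auto simp: cells_def)
    then have "B T m \<subseteq> steps_on J m" "B T m = {} \<or> l < card (B T m)"
      using bad unfolding bad_pattern_def steps_on_def by fast+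
    then show ?thesis using that by (simp add: \<beta>_def cell_patterns_def)
  qed
  then have "\<beta> \<in> PiE (cells M L) (cell_patterns J l)"
    by (auto simp: \<beta>_def)
  moreover have "jobs_disjoint (cells M L) \<beta>"
    using bad unfolding jobs_disjoint_def \<beta>_def cells_def bad_pattern_def
    by (simp add: mem_Times_iff)
  moreover have "pattern_size (cells M L) \<beta> = (\<Sum>T<2*L. \<Sum>m\<in>M. card (B T m))"
    by (simp add: pattern_size_def \<beta>_def cells_def sum.cartesian_product case_prod_beta)
  moreover have "card J < 2 * (\<Sum>T<2*L. \<Sum>m\<in>M. card (B T m))"
    using bad unfolding bad_pattern_def by blast
  ultimately have "\<beta> \<in> patterns M L l J"
    unfolding patterns_def by simp
  moreover have "pattern_occurs M L \<beta> h"
    using occ by (auto simp: pattern_occurs_def occurs_def virt_def \<beta>_def cells_def)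
  ultimately show ?thesis by blast
qed

lemma not_good_imp_card_gt:
  assumes "\<not> good_for_jobs M L l J h"
  shows "l < card J"
proof (rule ccontr)
  assume small: "\<not> l < card J"
  obtain B where bad: "bad_pattern M L l J B"
    using assms unfolding good_for_jobs_def by blast
  have "B T m = {}" if "T < 2 * L" "m \<in> M" for T m
    using bad that small unfolding bad_pattern_def by (meson le_less_trans not_less)
  then show False
    using bad unfolding bad_pattern_def by simp
qed

section \<open>The probability that a pattern occurs\<close>

lemma card_PiE_agree_le:
  assumes "finite D" "X \<subseteq> D" "finite A"
  shows "card {h \<in> PiE D (\<lambda>_. A). \<forall>x\<in>X. h x = g x} \<le> card A ^ (card D - card X)"
proof -
  let ?H = "{h \<in> PiE D (\<lambda>_. A). \<forall>x\<in>X. h x = g x}"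
  have "inj_on (\<lambda>h. restrict h (D - X)) ?H"
  proof (rule inj_onI, rule ext)
    fix h h' x
    assume h: "h \<in> ?H" and h': "h' \<in> ?H" and eq: "restrict h (D - X) = restrict h' (D - X)"
    consider "x \<notin> D" | "x \<in> X" | "x \<in> D - X" by blast
    then show "h x = h' x"
    proof cases
      case 1
      then show ?thesis
        using PiE_arb[of h D "\<lambda>_. A" x] PiE_arb[of h' D "\<lambda>_. A" x] h h' by simp
    next
      case 2
      then show ?thesis using h h' by simp
    next
      case 3
      then show ?thesis using fun_cong[OF eq, of x] by simp
    qed
  qed
  moreover have "(\<lambda>h. restrict h (D - X)) ` ?H \<subseteq> PiE (D - X) (\<lambda>_. A)"
    by (auto simp: restrict_PiE_iff dest: PiE_mem)
  moreover have "finite (PiE (D - X) (\<lambda>_. A))"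
    using assms by (intro finite_PiE) auto
  ultimately have "card ?H \<le> card (PiE (D - X) (\<lambda>_. A))"
    by (rule card_inj_on_le)
  also have "\<dots> = card A ^ card (D - X)"
    using assms(1) by (simp add: card_PiE)
  also have "card (D - X) = card D - card X"
    using assms(1,2) by (simp add: card_Diff_subset finite_subset)
  finally show ?thesis .
qed

lemma
  assumes "finite M" "finite J" "\<beta> \<in> patterns M L l J"
  shows pattern_jobs_subset: "fst ` (\<Union>q\<in>cells M L. \<beta> q) \<subseteq> J"
    and card_pattern_jobs: "card (fst ` (\<Union>q\<in>cells M L. \<beta> q)) = pattern_size (cells M L) \<beta>"
proof -
  let ?U = "\<Union>q\<in>cells M L. \<beta> q"
  have cell: "\<beta> q \<subseteq> steps_on J (snd q)" if "q \<in> cells M L" for q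
    using assms(3) PiE_mem[of \<beta> "cells M L" "cell_patterns J l" q] that
    by (simp add: patterns_def cell_patterns_def)
  show "fst ` ?U \<subseteq> J"
  proof
    fix x assume "x \<in> fst ` ?U"
    then obtain q i where "q \<in> cells M L" "(x, i) \<in> \<beta> q" by force
    then have "(x, i) \<in> steps_on J (snd q)" using cell by blast
    then show "x \<in> J" by (simp add: steps_on_def)
  qed
  have disj: "jobs_disjoint (cells M L) \<beta>"
    using assms(3) by (simp add: patterns_def)
  have "inj_on fst ?U"
  proof (rule inj_onI)
    fix u v assume u: "u \<in> ?U" and v: "v \<in> ?U" and "fst u = fst v"
    from u obtain q1 where "q1 \<in> cells M L" "u \<in> \<beta> q1" by blast
    moreover from v obtain q2 where "q2 \<in> cells M L" "v \<in> \<beta> q2" by blast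
    ultimately have "snd u = snd v"
      using disj \<open>fst u = fst v\<close> unfolding jobs_disjoint_def by (metis prod.collapse)
    with \<open>fst u = fst v\<close> show "u = v" by (simp add: prod_eq_iff)
  qed
  then have "card (fst ` ?U) = card ?U"
    by (rule card_image)
  also have "\<dots> = pattern_size (cells M L) \<beta>"
    unfolding pattern_size_def
  proof (rule card_UN_disjoint)
    show "finite (cells M L)" using assms(1) by (rule finite_cells)
    show "\<forall>q\<in>cells M L. finite (\<beta> q)"
      using cell finite_steps_on[OF assms(2)] finite_subset by blast
    show "\<forall>q1\<in>cells M L. \<forall>q2\<in>cells M L. q1 \<noteq> q2 \<longrightarrow> \<beta> q1 \<inter> \<beta> q2 = {}"
      using disj unfolding jobs_disjoint_def by fast
  qed
  finally show "card (fst ` ?U) = pattern_size (cells M L) \<beta>" .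
qed

lemma card_pattern_occurs_le:
  assumes "finite M" "finite D" "J \<subseteq> D" "\<beta> \<in> patterns M L l J"
  shows "card {h \<in> PiE D (\<lambda>_. {..<L}). pattern_occurs M L \<beta> h}
    \<le> L ^ (card D - pattern_size (cells M L) \<beta>)"
proof (cases "\<exists>h0. h0 \<in> PiE D (\<lambda>_. {..<L}) \<and> pattern_occurs M L \<beta> h0")
  case True
  then obtain h0 where h0: "h0 \<in> PiE D (\<lambda>_. {..<L})" "pattern_occurs M L \<beta> h0" by blast
  let ?X = "fst ` (\<Union>q\<in>cells M L. \<beta> q)"
  have "finite J"
    using assms(2,3) by (rule finite_subset[rotated])
  then have XD: "?X \<subseteq> D" and cX: "card ?X = pattern_size (cells M L) \<beta>"
    using pattern_jobs_subset[OF assms(1) _ assms(4)] card_pattern_jobs[OF assms(1) _ assms(4)]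
      assms(3) by auto
  have "{h \<in> PiE D (\<lambda>_. {..<L}). pattern_occurs M L \<beta> h}
      \<subseteq> {h \<in> PiE D (\<lambda>_. {..<L}). \<forall>x\<in>?X. h x = h0 x}"
  proof (intro subsetI CollectI conjI ballI)
    fix h x assume h: "h \<in> {h \<in> PiE D (\<lambda>_. {..<L}). pattern_occurs M L \<beta> h}" and "x \<in> ?X"
    then obtain q i where q: "q \<in> cells M L" "(x, i) \<in> \<beta> q" by force
    have "h x + i = fst q" "h0 x + i = fst q"
      using h h0 q unfolding pattern_occurs_def by auto
    then show "h x = h0 x" by simp
  qed (use h0 in auto)
  then have "card {h \<in> PiE D (\<lambda>_. {..<L}). pattern_occurs M L \<beta> h}
      \<le> card {h \<in> PiE D (\<lambda>_. {..<L}). \<forall>x\<in>?X. h x = h0 x}"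
    using finite_PiE[OF assms(2), of "\<lambda>_. {..<L}"] by (intro card_mono) auto
  also have "\<dots> \<le> L ^ (card D - pattern_size (cells M L) \<beta>)"
    using card_PiE_agree_le[OF assms(2) XD, of "{..<L}"] cX by simp
  finally show ?thesis .
next
  case False
  then have "{h \<in> PiE D (\<lambda>_. {..<L}). pattern_occurs M L \<beta> h} = {}" by blast
  then show ?thesis by (simp only: card.empty zero_le)
qed

lemma pattern_size_le_card:
  assumes "finite M" "finite D" "J \<subseteq> D" "\<beta> \<in> patterns M L l J"
  shows "pattern_size (cells M L) \<beta> \<le> card D"
proof -
  have "finite J"
    using assms(2,3) by (rule finite_subset[rotated])
  then have "fst ` (\<Union>q\<in>cells M L. \<beta> q) \<subseteq> J"
    by (rule pattern_jobs_subset[OF assms(1) _ assms(4)])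
  then have "card (fst ` (\<Union>q\<in>cells M L. \<beta> q)) \<le> card D"
    using assms(3) by (intro card_mono[OF assms(2)]) (rule subset_trans)
  then show ?thesis
    using card_pattern_jobs[OF assms(1) \<open>finite J\<close> assms(4)] by simp
qed

lemma pattern_occurs_fraction_le:
  assumes "finite M" "finite D" "J \<subseteq> D" "\<beta> \<in> patterns M L l J" "L \<ge> 1"
  shows "real (card {h \<in> PiE D (\<lambda>_. {..<L}). pattern_occurs M L \<beta> h})
           / real (card (PiE D (\<lambda>_. {..<L})))
         \<le> (1 / real L) ^ pattern_size (cells M L) \<beta>"
proof -
  let ?s = "pattern_size (cells M L) \<beta>"
  have "real (card {h \<in> PiE D (\<lambda>_. {..<L}). pattern_occurs M L \<beta> h})
           / real (card (PiE D (\<lambda>_. {..<L})))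
      \<le> real L ^ (card D - ?s) / real L ^ card D"
    using card_pattern_occurs_le[OF assms(1-4)] assms(2)
    by (simp add: card_PiE divide_right_mono flip: of_nat_power)
  also have "\<dots> = (1 / real L) ^ ?s"
    using pattern_size_le_card[OF assms(1-4)] assms(5) by (simp add: power_diff power_one_over)
  finally show ?thesis .
qed

lemma bad_fraction_le_pattern_sum:
  assumes "finite M" "finite D" "J \<subseteq> D" "L \<ge> 1"
  shows "real (card {h \<in> PiE D (\<lambda>_. {..<L}). \<not> good_for_jobs M L l J h})
           / real (card (PiE D (\<lambda>_. {..<L})))
         \<le> (\<Sum>\<beta>\<in>patterns M L l J. (1 / real L) ^ pattern_size (cells M L) \<beta>)"
proof -
  let ?F = "PiE D (\<lambda>_. {..<L})"
  let ?occ = "\<lambda>\<beta>. {h \<in> ?F. pattern_occurs M L \<beta> h}"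
  have fin: "finite (patterns M L l J)"
    using assms(1) finite_subset[OF assms(3,2)] by (rule finite_patterns)
  have "{h \<in> ?F. \<not> good_for_jobs M L l J h} \<subseteq> (\<Union>\<beta>\<in>patterns M L l J. ?occ \<beta>)"
    by (auto dest: not_good_imp_pattern_occurs)
  then have "card {h \<in> ?F. \<not> good_for_jobs M L l J h} \<le> card (\<Union>\<beta>\<in>patterns M L l J. ?occ \<beta>)"
    using finite_PiE[OF assms(2), of "\<lambda>_. {..<L}"] fin by (intro card_mono) auto
  also have "\<dots> \<le> (\<Sum>\<beta>\<in>patterns M L l J. card (?occ \<beta>))"
    by (rule card_UN_le[OF fin])
  finally have "real (card {h \<in> ?F. \<not> good_for_jobs M L l J h}) / real (card ?F)
      \<le> (\<Sum>\<beta>\<in>patterns M L l J. real (card (?occ \<beta>)) / real (card ?F))"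
    by (simp add: divide_right_mono flip: sum_divide_distrib of_nat_sum)
  also have "\<dots> \<le> (\<Sum>\<beta>\<in>patterns M L l J. (1 / real L) ^ pattern_size (cells M L) \<beta>)"
    using assms by (intro sum_mono pattern_occurs_fraction_le) auto
  finally show ?thesis .
qed

section \<open>Exponential tilting\<close>

lemma pattern_sum_le_cell_product:
  assumes "finite M" "finite J" "\<mu> \<ge> 1"
  shows "(\<Sum>\<beta>\<in>patterns M L l J. (1 / real L) ^ pattern_size (cells M L) \<beta>)
    \<le> \<mu> powr (- real (card J) / 2) * (\<Prod>q\<in>cells M L. \<Sum>Y\<in>cell_patterns J l q. (\<mu> / real L) ^ card Y)"
proof -
  let ?Q = "cells M L"
  let ?c = "\<mu> powr (- real (card J) / 2)"
  have fin: "finite (PiE ?Q (cell_patterns J l))"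
    using assms by (intro finite_PiE finite_cells finite_cell_patterns)
  have "(\<Sum>\<beta>\<in>patterns M L l J. (1 / real L) ^ pattern_size ?Q \<beta>)
      \<le> (\<Sum>\<beta>\<in>patterns M L l J. ?c * (\<mu> / real L) ^ pattern_size ?Q \<beta>)"
  proof (rule sum_mono)
    fix \<beta> assume "\<beta> \<in> patterns M L l J"
    then have "real (card J) / 2 \<le> real (pattern_size ?Q \<beta>)"
      by (simp add: patterns_def)
    then have "1 \<le> \<mu> powr (real (pattern_size ?Q \<beta>) - real (card J) / 2)"
      using assms(3) by (intro ge_one_powr_ge_zero) auto
    also have "\<dots> = ?c * \<mu> ^ pattern_size ?Q \<beta>"
      using assms(3) by (simp add: powr_diff powr_minus_divide powr_realpow)
    finally have "1 / real L ^ pattern_size ?Q \<beta>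
        \<le> ?c * \<mu> ^ pattern_size ?Q \<beta> / real L ^ pattern_size ?Q \<beta>"
      by (rule divide_right_mono) simp
    then show "(1 / real L) ^ pattern_size ?Q \<beta> \<le> ?c * (\<mu> / real L) ^ pattern_size ?Q \<beta>"
      by (simp add: power_divide)
  qed
  also have "\<dots> \<le> ?c * (\<Sum>\<beta>\<in>PiE ?Q (cell_patterns J l). (\<mu> / real L) ^ pattern_size ?Q \<beta>)"
    unfolding sum_distrib_left[symmetric] using assms(3) fin
    by (intro mult_left_mono sum_mono2) (auto simp: patterns_def)
  also have "(\<Sum>\<beta>\<in>PiE ?Q (cell_patterns J l). (\<mu> / real L) ^ pattern_size ?Q \<beta>)
      = (\<Prod>q\<in>?Q. \<Sum>Y\<in>cell_patterns J l q. (\<mu> / real L) ^ card Y)"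
    unfolding pattern_size_def power_sum
    using assms by (intro prod_sum_PiE[symmetric] finite_cells finite_cell_patterns)
  finally show ?thesis .
qed

lemma power_div_fact_le_exp:
  fixes x :: real
  assumes "0 \<le> x"
  shows "x ^ n / fact n \<le> exp x"
proof -
  have "(\<lambda>n. x ^ n / fact n) sums exp x"
    using exp_converges[of x] by (simp add: divide_inverse mult.commute)
  then show ?thesis
    using sum_le_suminf[of "\<lambda>n. x ^ n / fact n" "{n}"] assms by (simp add: sums_iff)
qed

lemma power_div_fact_le:
  fixes \<mu> :: real
  assumes "l < r" "0 < \<mu>" "exp 1 * \<mu> / real (Suc l) \<le> 1"
  shows "\<mu> ^ r / fact r \<le> (exp 1 * \<mu> / real (Suc l)) ^ Suc l"
proof -
  let ?t = "exp 1 * \<mu> / real (Suc l)"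
  have r: "real r > 0" using assms(1) by simp
  have "\<mu> ^ r / fact r = (real r ^ r / fact r) * (\<mu> / real r) ^ r"
    using r by (simp add: power_divide)
  also have "\<dots> \<le> exp (real r) * (\<mu> / real r) ^ r"
    using assms(2) by (intro mult_right_mono power_div_fact_le_exp) auto
  also have "\<dots> = (exp 1 * \<mu> / real r) ^ r"
    using exp_of_nat_mult[of r "1::real"] by (simp add: power_mult_distrib power_divide)
  also have "\<dots> \<le> ?t ^ r"
    using assms(1,2) by (intro power_mono divide_left_mono) auto
  also have "\<dots> \<le> ?t ^ Suc l"
    using assms by (intro power_decreasing) auto
  finally show ?thesis .
qed

lemma choose_mult_power_le:
  fixes \<mu> :: real
  assumes "p \<le> L" "l < r" "0 < \<mu>" "exp 1 * \<mu> / real (Suc l) \<le> 1"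
  shows "real (p choose r) * (\<mu> / real L) ^ r \<le> (exp 1 * \<mu> / real (Suc l)) ^ Suc l"
proof -
  have px: "real p * (\<mu> / real L) \<le> \<mu>"
  proof (cases "L = 0")
    case False
    then have "real p * (\<mu> / real L) \<le> real L * (\<mu> / real L)"
      using assms(1,3) by (intro mult_right_mono) auto
    with False show ?thesis by simp
  qed (use assms(3) in simp)
  have "real (p choose r) * fact r \<le> real p ^ r"
    using binomial_fact_pow[of p r] by (metis of_nat_fact of_nat_le_iff of_nat_mult of_nat_power)
  then have "real (p choose r) \<le> real p ^ r / fact r"
    by (simp add: pos_le_divide_eq)
  then have "real (p choose r) * (\<mu> / real L) ^ r \<le> real p ^ r / fact r * (\<mu> / real L) ^ r"
    by (rule mult_right_mono) (use assms(3) in simp)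
  also have "\<dots> = (real p * (\<mu> / real L)) ^ r / fact r"
    by (simp only: power_mult_distrib times_divide_eq_left)
  also have "\<dots> \<le> \<mu> ^ r / fact r"
    using px assms(3) by (intro divide_right_mono power_mono) auto
  also have "\<dots> \<le> (exp 1 * \<mu> / real (Suc l)) ^ Suc l"
    using assms(2-4) by (rule power_div_fact_le)
  finally show ?thesis .
qed

lemma cell_sum_le:
  fixes \<mu> :: real
  assumes "finite J" "card (steps_on J (snd q)) \<le> L" "0 < \<mu>" "exp 1 * \<mu> / real (Suc l) \<le> 1"
  shows "(\<Sum>Y\<in>cell_patterns J l q. (\<mu> / real L) ^ card Y)
    \<le> 1 + real L * (exp 1 * \<mu> / real (Suc l)) ^ Suc l"
proof -
  let ?P = "steps_on J (snd q)"
  let ?p = "card ?P"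
  let ?x = "\<mu> / real L"
  let ?t = "exp 1 * \<mu> / real (Suc l)"
  define Big where "Big = {Y. Y \<subseteq> ?P \<and> l < card Y}"
  have fin: "finite ?P" using assms(1) by (rule finite_steps_on)
  then have "finite Big" by (simp add: Big_def)
  moreover have "cell_patterns J l q = insert {} Big" "{} \<notin> Big"
    by (auto simp: cell_patterns_def Big_def)
  ultimately have "(\<Sum>Y\<in>cell_patterns J l q. ?x ^ card Y) = 1 + (\<Sum>Y\<in>Big. ?x ^ card Y)"
    by simp
  also have "(\<Sum>Y\<in>Big. ?x ^ card Y) = (\<Sum>r\<in>{l<..?p}. \<Sum>Y\<in>{Y \<in> Big. card Y = r}. ?x ^ card Y)"
    using \<open>finite Big\<close> fin by (intro sum.group[symmetric]) (auto simp: Big_def intro: card_mono)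
  also have "\<dots> = (\<Sum>r\<in>{l<..?p}. real (?p choose r) * ?x ^ r)"
  proof (rule sum.cong)
    fix r assume "r \<in> {l<..?p}"
    then have "{Y \<in> Big. card Y = r} = {Y. Y \<subseteq> ?P \<and> card Y = r}"
      by (auto simp: Big_def)
    then show "(\<Sum>Y\<in>{Y \<in> Big. card Y = r}. ?x ^ card Y) = real (?p choose r) * ?x ^ r"
      using n_subsets[OF fin] by simp
  qed simp
  also have "\<dots> \<le> (\<Sum>r\<in>{l<..?p}. ?t ^ Suc l)"
    using assms(2-4) by (intro sum_mono choose_mult_power_le) auto
  also have "\<dots> = real (?p - l) * ?t ^ Suc l"
    by simp
  also have "\<dots> \<le> real L * ?t ^ Suc l"
    using assms(2,3) by (intro mult_right_mono) auto
  finally show ?thesis by simp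
qed

lemma bad_fraction_le_tilted:
  fixes \<mu> :: real and l :: nat
  defines "t \<equiv> exp 1 * \<mu> / real (Suc l)"
  assumes "finite M" "finite D" "J \<subseteq> D" "L \<ge> 1" "congestion M J \<le> L" "1 \<le> \<mu>" "t \<le> 1"
  shows "real (card {h \<in> PiE D (\<lambda>_. {..<L}). \<not> good_for_jobs M L l J h})
           / real (card (PiE D (\<lambda>_. {..<L})))
         \<le> \<mu> powr (- real (card J) / 2) * exp (real (2 * L * card M) * (real L * t ^ Suc l))"
proof -
  let ?d = "real L * t ^ Suc l"
  have "finite J" using assms(3,4) by (rule finite_subset[rotated])
  have "real (card {h \<in> PiE D (\<lambda>_. {..<L}). \<not> good_for_jobs M L l J h})
           / real (card (PiE D (\<lambda>_. {..<L})))
      \<le> (\<Sum>\<beta>\<in>patterns M L l J. (1 / real L) ^ pattern_size (cells M L) \<beta>)"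
    using assms(2-5) by (rule bad_fraction_le_pattern_sum)
  also have "\<dots> \<le> \<mu> powr (- real (card J) / 2)
      * (\<Prod>q\<in>cells M L. \<Sum>Y\<in>cell_patterns J l q. (\<mu> / real L) ^ card Y)"
    using assms(2) \<open>finite J\<close> assms(7) by (rule pattern_sum_le_cell_product)
  also have "(\<Prod>q\<in>cells M L. \<Sum>Y\<in>cell_patterns J l q. (\<mu> / real L) ^ card Y)
      \<le> (\<Prod>q\<in>cells M L. 1 + ?d)"
  proof (rule prod_mono)
    fix q assume "q \<in> cells M L"
    then have "card (steps_on J (snd q)) \<le> L"
      using card_steps_on_le_congestion[OF assms(2) \<open>finite J\<close>] assms(6) by (force simp: cells_def)
    then show "0 \<le> (\<Sum>Y\<in>cell_patterns J l q. (\<mu> / real L) ^ card Y) \<and>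
        (\<Sum>Y\<in>cell_patterns J l q. (\<mu> / real L) ^ card Y) \<le> 1 + ?d"
      using cell_sum_le[OF \<open>finite J\<close>] assms(7,8) unfolding t_def by (auto intro: sum_nonneg)
  qed
  also have "\<dots> = (1 + ?d) ^ (2 * L * card M)"
    by (simp add: card_cells)
  also have "\<dots> \<le> exp ?d ^ (2 * L * card M)"
    using assms(7) by (intro power_mono) (auto simp: t_def)
  also have "\<dots> = exp (real (2 * L * card M) * ?d)"
    by (simp flip: exp_of_nat_mult)
  finally show ?thesis
    by (simp add: mult_left_mono)
qed

section \<open>Estimates for the parameters\<close>

lemma ln_le_divide_exp1:
  fixes z :: real
  assumes "0 < z"
  shows "ln z \<le> z / exp 1"
  using ln_le_minus_one[of "z / exp 1"] assms by (simp add: ln_div)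

lemma
  fixes m c :: real and l :: nat
  assumes m: "32 \<le> m" and c: "1 \<le> c" and l: "150 * c * ln m / ln (ln m) \<le> real l"
  shows threshold_ge_300: "300 \<le> real l"
    and threshold_mult_ln_ge: "75 * c * ln m \<le> real l * ln (real l)"
proof -
  define x where "x = ln m"
  define y where "y = 150 * c * x / ln x"
  have "exp 1 < m" using exp_le m by linarith
  then have "1 < x" unfolding x_def using ln_less_cancel_iff[of "exp 1" m] m by simp
  then have lnx: "0 < ln x" by simp
  have "exp 1 \<le> x / ln x"
    using ln_le_divide_exp1[of x] \<open>1 < x\<close> lnx by (simp add: field_simps)
  then have "150 * c * exp 1 \<le> 150 * c * (x / ln x)"
    using c by (intro mult_left_mono) auto
  then have "150 * c * exp 1 \<le> y"
    by (simp add: y_def)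
  have e2: "2 \<le> exp (1::real)"
    using exp_ge_add_one_self[of 1] by simp
  then have "1 * 2 \<le> c * exp 1"
    using c by (intro mult_mono) auto
  with \<open>150 * c * exp 1 \<le> y\<close> have y: "300 \<le> y" by simp
  have yl: "y \<le> real l" using l unfolding y_def x_def .
  with y show "300 \<le> real l" by simp
  have "ln (ln x) \<le> ln x / exp 1"
    using lnx by (rule ln_le_divide_exp1)
  also have "\<dots> \<le> ln x / 2"
    using e2 lnx by (intro divide_left_mono) auto
  finally have "ln (ln x) \<le> ln x / 2" .
  moreover have "ln y = ln (150 * c) + ln x - ln (ln x)"
    unfolding y_def using c \<open>1 < x\<close> lnx by (simp add: ln_div ln_mult)
  moreover have "0 \<le> ln (150 * c)" using c by simp
  ultimately have lny: "ln x / 2 \<le> ln y" by linarith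
  have "75 * c * ln m = y * (ln x / 2)"
    unfolding y_def x_def using lnx by (simp add: field_simps x_def)
  also have "\<dots> \<le> y * ln y"
    using lny y by (intro mult_left_mono) auto
  also have "\<dots> \<le> real l * ln (real l)"
    using yl y by (intro mult_mono) auto
  finally show "75 * c * ln m \<le> real l * ln (real l)" .
qed

lemma
  fixes l :: nat
  defines "\<mu> \<equiv> real l powr (1/3)"
  assumes l: "300 \<le> real l"
  shows tilting_base_le_1: "exp 1 * \<mu> / real (Suc l) \<le> 1"
    and tilting_base_power_le:
      "(exp 1 * \<mu> / real (Suc l)) ^ Suc l \<le> real l powr (- real (Suc l) / 3)"
proof -
  let ?t = "exp 1 * \<mu> / real (Suc l)"
  have lpos: "0 < real l" using l by simp
  have mu3: "\<mu> ^ 3 = real l"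
    unfolding \<mu>_def using lpos by (simp flip: powr_realpow add: powr_powr)
  have mu_ge: "3 \<le> \<mu>"
  proof (rule ccontr)
    assume "\<not> 3 \<le> \<mu>"
    then have "\<mu> ^ 3 < 3 ^ 3" unfolding \<mu>_def by (intro power_strict_mono) auto
    with mu3 l show False by simp
  qed
  have "exp 1 * \<mu> * \<mu> \<le> \<mu> * \<mu> * \<mu>"
    using exp_le mu_ge by (intro mult_right_mono) auto
  also have "\<dots> \<le> real (Suc l)"
    using mu3 by (simp add: power3_eq_cube)
  finally have tle: "?t \<le> 1 / \<mu>"
    using mu_ge by (simp add: field_simps)
  moreover have "1 / \<mu> \<le> 1"
    using mu_ge by simp
  ultimately show "?t \<le> 1"
    by linarith
  have "?t ^ Suc l \<le> (1 / \<mu>) ^ Suc l"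
    using tle mu_ge by (intro power_mono) auto
  also have "\<dots> = 1 / \<mu> powr real (Suc l)"
    using powr_realpow[of \<mu> "Suc l"] mu_ge by (simp only: power_one_over)
  also have "\<dots> = \<mu> powr (- real (Suc l))"
    by (rule powr_minus_divide[symmetric])
  also have "\<dots> = real l powr (- real (Suc l) / 3)"
    unfolding \<mu>_def using lpos by (simp add: powr_powr)
  finally show "?t ^ Suc l \<le> real l powr (- real (Suc l) / 3)" .
qed

lemma cells_mult_le_powr:
  fixes l L K :: nat and c :: real
  assumes l: "300 \<le> real l" "75 * c * ln (real K) \<le> real l * ln (real l)"
    and c: "1 \<le> c" and K: "32 \<le> real K" and LK: "real L \<le> 2 * real K powr c"
  shows "real (2 * L * K) * real L \<le> real l powr (real (Suc l) / 3)"
proof -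
  have Kpos: "0 < real K" using K by simp
  have "real (2 * L * K) * real L = 2 * real K * real L ^ 2"
    by (simp add: power2_eq_square)
  also have "\<dots> \<le> 2 * real K * (2 * real K powr c) ^ 2"
    using LK by (intro mult_left_mono power_mono) auto
  also have "\<dots> = 8 * (real K * real K powr (2 * c))"
    using Kpos by (simp add: power_mult_distrib powr_power)
  also have "\<dots> \<le> real K * (real K * real K powr (2 * c))"
    using K by (intro mult_right_mono) auto
  also have "\<dots> = real K powr 2 * real K powr (2 * c)"
    using Kpos by (simp add: power2_eq_square)
  also have "\<dots> = real K powr (2 * c + 2)"
    by (simp only: powr_add mult.commute)
  also have "\<dots> \<le> real K powr (25 * c)"
    using K c by (intro powr_mono) auto
  also have "\<dots> = exp (25 * c * ln (real K))"
    using Kpos by (simp add: powr_def)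
  also have "\<dots> \<le> exp (real (Suc l) * ln (real l) / 3)"
  proof -
    have "real l * ln (real l) \<le> real (Suc l) * ln (real l)"
      using l by (intro mult_right_mono) auto
    then show ?thesis
      using l(2) by (intro exp_mono) linarith
  qed
  also have "\<dots> = real l powr (real (Suc l) / 3)"
    using l by (simp add: powr_def)
  finally show ?thesis .
qed

lemma tilting_error_le_1:
  fixes l L K :: nat and c :: real
  defines "\<mu> \<equiv> real l powr (1/3)"
  assumes "300 \<le> real l" "75 * c * ln (real K) \<le> real l * ln (real l)"
    and "1 \<le> c" "32 \<le> real K" "real L \<le> 2 * real K powr c"
  shows "real (2 * L * K) * (real L * (exp 1 * \<mu> / real (Suc l)) ^ Suc l) \<le> 1"
proof -
  have "real (2 * L * K) * (real L * (exp 1 * \<mu> / real (Suc l)) ^ Suc l)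
      \<le> real l powr (real (Suc l) / 3) * real l powr (- real (Suc l) / 3)"
    unfolding mult.assoc[symmetric] \<mu>_def
    using cells_mult_le_powr[OF assms(2-6)] tilting_base_power_le[OF assms(2)]
    by (intro mult_mono) auto
  also have "\<dots> = real l powr 0"
    by (simp flip: powr_add add_divide_distrib)
  also have "\<dots> = 1"
    using assms(2) by simp
  finally show ?thesis .
qed

lemma bad_fraction_le:
  assumes "finite M" "32 \<le> card M" "1 \<le> c" "real L \<le> 2 * real (card M) powr c"
    and "150 * c * ln (card M) / ln (ln (card M)) \<le> real l"
    and "finite D" "J \<subseteq> D" "1 \<le> L" "congestion M J \<le> L"
  shows "real (card {h \<in> PiE D (\<lambda>_. {..<L}). \<not> good_for_jobs M L l J h})
           / real (card (PiE D (\<lambda>_. {..<L})))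
         \<le> (real l powr (- 1 / 8)) ^ card J"
proof (cases "\<forall>h. good_for_jobs M L l J h")
  case False
  then have "l < card J" using not_good_imp_card_gt by blast
  define \<mu> where "\<mu> = real l powr (1 / 3)"
  let ?n = "real (card J)"
  let ?E = "exp (real (2 * L * card M) * (real L * (exp 1 * \<mu> / real (Suc l)) ^ Suc l))"
  have M: "32 \<le> real (card M)" using assms(2) by simp
  have l: "300 \<le> real l" "75 * c * ln (card M) \<le> real l * ln (real l)"
    using threshold_ge_300[OF M assms(3,5)] threshold_mult_ln_ge[OF M assms(3,5)] by auto
  have "1 \<le> \<mu>" unfolding \<mu>_def using l by (intro ge_one_powr_ge_zero) auto
  then have "real (card {h \<in> PiE D (\<lambda>_. {..<L}). \<not> good_for_jobs M L l J h})
           / real (card (PiE D (\<lambda>_. {..<L})))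
      \<le> \<mu> powr (- ?n / 2) * ?E"
    using bad_fraction_le_tilted assms(1,6-9) tilting_base_le_1[OF l(1)]
    unfolding \<mu>_def by blast
  also have "\<dots> \<le> real l powr (- ?n / 6) * real l powr (?n / 24)"
  proof (intro mult_mono)
    show "\<mu> powr (- ?n / 2) \<le> real l powr (- ?n / 6)"
      unfolding \<mu>_def by (simp add: powr_powr)
    have "?E \<le> exp 1"
      using tilting_error_le_1[OF l assms(3) M assms(4)] unfolding \<mu>_def by simp
    also have "\<dots> \<le> real l powr 1"
      using exp_le l by simp
    also have "\<dots> \<le> real l powr (?n / 24)"
      using \<open>l < card J\<close> l by (intro powr_mono) auto
    finally show "?E \<le> real l powr (?n / 24)" .
  qed auto
  also have "\<dots> = (real l powr (- 1 / 8)) ^ card J"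
    using l by (simp add: powr_powr flip: powr_add powr_realpow)
  finally show ?thesis .
qed simp

section \<open>Independent hash functions\<close>

lemma sum_Pow_power_card:
  fixes a :: "'a :: comm_semiring_1"
  assumes "finite D"
  shows "(\<Sum>X\<in>Pow D. a ^ card X) = (1 + a) ^ card D"
proof -
  have "(\<Sum>X\<in>Pow D. a ^ card X) = (\<Sum>X\<in>Pow D. (\<Prod>x\<in>X. a) * (\<Prod>x\<in>D - X. 1))"
    by simp
  also have "\<dots> = (\<Prod>x\<in>D. a + 1)"
    by (rule prod_add[OF assms, symmetric])
  also have "\<dots> = (1 + a) ^ card D"
    by (simp add: add.commute)
  finally show ?thesis .
qed

lemma finite_ids: "finite (ids M c)"
  by (simp add: ids_def)

lemma card_ids_le: "real (card (ids M c)) \<le> real (card M) powr c"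
proof -
  have "real (card (ids M c)) = real_of_int \<lfloor>real (card M) powr c\<rfloor>"
    by (simp add: ids_def)
  also have "\<dots> \<le> real (card M) powr c"
    by (rule of_int_floor_le)
  finally show ?thesis .
qed

lemma card_PiE_all_fraction:
  "real (card {hs \<in> PiE {..<k} (\<lambda>_. F). \<forall>i<k. P (hs i)}) / real (card (PiE {..<k} (\<lambda>_. F)))
    = (real (card {h \<in> F. P h}) / real (card F)) ^ k"
proof -
  have "{hs \<in> PiE {..<k} (\<lambda>_. F). \<forall>i<k. P (hs i)} = PiE {..<k} (\<lambda>_. {h \<in> F. P h})"
    unfolding PiE_def Pi_def by auto
  then show ?thesis
    by (simp add: card_PiE power_divide)
qed

lemma not_good_family_imp_bad_job_set:
  assumes "\<not> good_family M c S L l k hs" "1 \<le> k"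
  obtains J where "J \<in> Pow (S \<times> ids M c) - {{}}" "congestion M J \<le> L"
    "\<forall>i<k. \<not> good_for_jobs M L l J (hs i)"
proof -
  obtain J where J: "job_set M c J" "supported S J" "congestion M J + dilation J \<le> L"
    and fail: "\<forall>i<k. \<not> good_for_jobs M L l J (hs i)"
    using assms(1) unfolding good_family_def by blast
  have "J \<subseteq> S \<times> ids M c"
    using J(1,2) by (auto simp: job_set_def supported_def mem_Times_iff)
  moreover have "J \<noteq> {}"
    using not_good_imp_card_gt fail assms(2) by fastforce
  ultimately show ?thesis
    using J(3) fail by (intro that) auto
qed

lemma prob_not_good_family_le:
  fixes M :: "'m set" and S :: "'m list set" and c p :: real
  defines "D \<equiv> S \<times> ids M c"
  assumes "finite S" "1 \<le> L" "1 \<le> k" "0 \<le> p"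
    and bad: "\<And>J. J \<subseteq> D \<Longrightarrow> congestion M J \<le> L \<Longrightarrow>
      real (card {h \<in> PiE D (\<lambda>_. {..<L}). \<not> good_for_jobs M L l J h})
        / real (card (PiE D (\<lambda>_. {..<L}))) \<le> p ^ card J"
  shows "measure_pmf.prob (random_hashes M c S L k) {hs. \<not> good_family M c S L l k hs}
           \<le> (1 + p ^ k) ^ card D - 1"
proof -
  define F where "F = PiE D (\<lambda>_. {..<L})"
  define H where "H = PiE {..<k} (\<lambda>_. F)"
  define fails where "fails J = {hs \<in> H. \<forall>i<k. \<not> good_for_jobs M L l J (hs i)}" for J
  define Js where "Js = {J \<in> Pow D - {{}}. congestion M J \<le> L}"
  have "finite D" using assms(2) by (simp add: D_def finite_ids)
  then have "finite F" "F \<noteq> {}"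
    using assms(3) by (auto simp: F_def finite_PiE PiE_eq_empty_iff lessThan_empty_iff)
  then have "finite H" "H \<noteq> {}" by (auto simp: H_def finite_PiE PiE_eq_empty_iff)
  have "finite Js" using \<open>finite D\<close> by (simp add: Js_def)
  have "H \<inter> {hs. \<not> good_family M c S L l k hs} \<subseteq> (\<Union>J\<in>Js. fails J)"
  proof
    fix hs assume hs: "hs \<in> H \<inter> {hs. \<not> good_family M c S L l k hs}"
    then have "\<not> good_family M c S L l k hs" by simp
    then obtain J where "J \<in> Pow D - {{}}" "congestion M J \<le> L"
        and fail: "\<forall>i<k. \<not> good_for_jobs M L l J (hs i)"
      unfolding D_def by (rule not_good_family_imp_bad_job_set[OF _ assms(4)])
    then have "J \<in> Js" by (simp add: Js_def)
    moreover have "hs \<in> fails J" using hs fail by (simp add: fails_def)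
    ultimately show "hs \<in> (\<Union>J\<in>Js. fails J)" by blast
  qed
  then have "card (H \<inter> {hs. \<not> good_family M c S L l k hs}) \<le> card (\<Union>J\<in>Js. fails J)"
    using \<open>finite Js\<close> \<open>finite H\<close> by (intro card_mono) (auto simp: fails_def)
  also have "\<dots> \<le> (\<Sum>J\<in>Js. card (fails J))"
    using \<open>finite Js\<close> by (rule card_UN_le)
  finally have "real (card (H \<inter> {hs. \<not> good_family M c S L l k hs}))
      \<le> (\<Sum>J\<in>Js. real (card (fails J)))"
    by (simp flip: of_nat_sum)
  then have "measure_pmf.prob (random_hashes M c S L k) {hs. \<not> good_family M c S L l k hs}
      \<le> (\<Sum>J\<in>Js. real (card (fails J)) / real (card H))"
    using \<open>finite H\<close> \<open>H \<noteq> {}\<close>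
    by (simp add: random_hashes_def H_def F_def D_def measure_pmf_of_set divide_right_mono
        flip: sum_divide_distrib)
  also have "\<dots> \<le> (\<Sum>J\<in>Js. (p ^ k) ^ card J)"
  proof (rule sum_mono)
    fix J assume "J \<in> Js"
    then have "J \<subseteq> D" "congestion M J \<le> L"
      by (auto simp: Js_def)
    then have "real (card {h \<in> F. \<not> good_for_jobs M L l J h}) / real (card F) \<le> p ^ card J"
      unfolding F_def by (rule bad)
    then have "(real (card {h \<in> F. \<not> good_for_jobs M L l J h}) / real (card F)) ^ k
        \<le> (p ^ card J) ^ k"
      by (intro power_mono) auto
    then have "real (card (fails J)) / real (card H) \<le> (p ^ card J) ^ k"
      using card_PiE_all_fraction[of k F "\<lambda>h. \<not> good_for_jobs M L l J h"]
      by (simp add: fails_def H_def)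
    then show "real (card (fails J)) / real (card H) \<le> (p ^ k) ^ card J"
      by (simp only: power_mult[symmetric] mult.commute)
  qed
  also have "\<dots> \<le> (\<Sum>J\<in>Pow D - {{}}. (p ^ k) ^ card J)"
    using \<open>finite D\<close> assms(5) by (intro sum_mono2) (auto simp: Js_def)
  also have "\<dots> = (1 + p ^ k) ^ card D - 1"
    using \<open>finite D\<close> by (simp add: sum_diff1 sum_Pow_power_card)
  finally show ?thesis .
qed

lemma one_plus_power_minus_one_le:
  fixes a :: real
  assumes "0 \<le> a"
  shows "(1 + a) ^ N - 1 \<le> real N * a * (1 + a) ^ N"
proof (induction N)
  case (Suc N)
  have "1 \<le> (1 + a) ^ Suc N" using assms by (intro one_le_power) auto
  have "(1 + a) ^ Suc N - 1 = (1 + a) * ((1 + a) ^ N - 1) + a"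
    by (simp add: algebra_simps)
  also have "\<dots> \<le> (1 + a) * (real N * a * (1 + a) ^ N) + a * (1 + a) ^ Suc N"
    using Suc.IH assms \<open>1 \<le> (1 + a) ^ Suc N\<close>
    by (intro add_mono mult_left_mono) (auto simp: mult_le_cancel_left1)
  also have "\<dots> = real (Suc N) * a * (1 + a) ^ Suc N"
    by (simp add: algebra_simps)
  finally show ?case .
qed simp

lemma one_plus_power_le_exp:
  fixes a :: real
  assumes "0 \<le> a"
  shows "(1 + a) ^ N \<le> exp (real N * a)"
proof -
  have "(1 + a) ^ N \<le> exp a ^ N"
    using assms by (intro power_mono) auto
  then show ?thesis
    by (simp flip: exp_of_nat_mult)
qed

lemma one_plus_power_minus_one_le_powr:
  fixes a b c s m :: real and N :: nat
  assumes "0 \<le> a" "0 \<le> b" "0 \<le> c" "1 \<le> s" "32 \<le> m" "real N \<le> s * m powr c"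
    and "a \<le> exp (- ((b + 1) * (ln s + (c + 1) * ln m)))"
  shows "(1 + a) ^ N - 1 \<le> 2 * m powr (- b)"
proof -
  have m: "0 < m" "0 \<le> ln m" using assms(5) by auto
  have "real N * a \<le> s * m powr c * exp (- ((b + 1) * (ln s + (c + 1) * ln m)))"
    using assms(1,6,7) by (intro mult_mono) auto
  also have "\<dots> = exp (ln s) * exp (c * ln m) * exp (- ((b + 1) * (ln s + (c + 1) * ln m)))"
    using assms(4) m by (simp add: powr_def mult.commute)
  also have "\<dots> = exp (ln s + c * ln m - (b + 1) * (ln s + (c + 1) * ln m))"
    by (simp only: exp_add diff_conv_add_uminus)
  also have "\<dots> \<le> exp (- (b + 1) * ln m)"
    using assms(2-4) m by (simp add: algebra_simps)
  also have "\<dots> = m powr (- b - 1)"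
    using m by (simp add: powr_def algebra_simps)
  also have "\<dots> = m powr (- b) / m"
    using m by (simp add: powr_diff)
  finally have Na: "real N * a \<le> m powr (- b) / m" .
  also have "\<dots> \<le> 1"
  proof -
    have "1 * 1 \<le> m * m powr b"
      using assms(2,5) by (intro mult_mono ge_one_powr_ge_zero) auto
    then show ?thesis using m by (simp add: powr_minus_divide field_simps)
  qed
  finally have "real N * a \<le> 1" .
  have "(1 + a) ^ N \<le> exp (real N * a)"
    using assms(1) by (rule one_plus_power_le_exp)
  also have "\<dots> \<le> 3"
    using exp_mono[OF \<open>real N * a \<le> 1\<close>] exp_le by linarith
  finally have "(1 + a) ^ N \<le> 3" .
  have "(1 + a) ^ N - 1 \<le> real N * a * (1 + a) ^ N"
    using assms(1) by (rule one_plus_power_minus_one_le)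
  also have "\<dots> \<le> m powr (- b) / m * 3"
    using Na \<open>(1 + a) ^ N \<le> 3\<close> assms(1) m by (intro mult_mono) auto
  also have "\<dots> \<le> 2 * m powr (- b)"
    using assms(5) by (simp add: field_simps)
  finally show ?thesis .
qed

lemma
  fixes s m b c :: real and l k :: nat
  assumes "1 \<le> s" "32 \<le> m" "0 \<le> c" "0 \<le> b" "300 \<le> real l"
    and k: "8 * (b + 1) * (ln s + (c + 1) * ln m) / ln l \<le> real k"
  shows repetitions_power_le:
      "(real l powr (- 1 / 8)) ^ k \<le> exp (- ((b + 1) * (ln s + (c + 1) * ln m)))"
    and repetitions_ge_1: "1 \<le> k"
proof -
  let ?A = "ln s + (c + 1) * ln m"
  have "0 < (c + 1) * ln m"
    using assms(2,3) by (intro mult_pos_pos) auto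
  then have "0 < (b + 1) * ?A"
    using ln_ge_zero[OF assms(1)] assms(4) by (intro mult_pos_pos) auto
  have "8 * ((b + 1) * ?A) \<le> real k * ln l"
    using k assms(5) by (simp add: pos_divide_le_eq algebra_simps)
  then have "- (real k * ln l) / 8 \<le> - ((b + 1) * ?A)"
    by linarith
  moreover have "(real l powr (- 1 / 8)) ^ k = exp (- (real k * ln l) / 8)"
    using assms(5) by (simp add: powr_def flip: powr_realpow)
  ultimately show a: "(real l powr (- 1 / 8)) ^ k \<le> exp (- ((b + 1) * ?A))"
    by simp
  with \<open>0 < (b + 1) * ?A\<close> show "1 \<le> k"
    by (cases k) auto
qed

theorem lemma5p18:
  fixes M :: "'m set" and S :: "'m list set" and c b :: real and L l k :: nat
  assumes "finite M" and "card M \<ge> 32" and "c \<ge> 1"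
    and "finite S" and "S \<noteq> {}" and "S \<subseteq> lists M"
    and "L \<ge> 1" and "real L \<le> 2 * real (card M) powr c"
    and "real l \<ge> 150 * c * ln (card M) / ln (ln (card M))"
    and "real k \<ge> 8 * (b + 1) * (ln (card S) + (c + 1) * ln (card M)) / ln l"
  shows "measure_pmf.prob (random_hashes M c S L k) {hs. good_family M c S L l k hs}
           \<ge> 1 - 2 * real (card M) powr (- b)"
proof (cases "b < 0")
  case True
  then have "1 - 2 * real (card M) powr (- b) \<le> 0"
    using assms(2) ge_one_powr_ge_zero[of "real (card M)" "- b"] by simp
  then show ?thesis by (meson measure_nonneg order_trans)
next
  case False
  let ?a = "real l powr (- 1 / 8)"
  have l: "300 \<le> real l"
    using assms(2,3,9) by (intro threshold_ge_300[of "real (card M)" c]) auto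
  have S: "1 \<le> real (card S)"
    using assms(4,5) by (simp add: Suc_le_eq card_gt_0_iff)
  have params: "32 \<le> real (card M)" "0 \<le> c" "0 \<le> b"
    using assms(2,3) False by auto
  note a = repetitions_power_le[OF S params l assms(10)] repetitions_ge_1[OF S params l assms(10)]
  have "real (card (S \<times> ids M c)) \<le> real (card S) * real (card M) powr c"
    using card_ids_le[of M c] by (simp add: card_cartesian_product mult_left_mono)
  then have "(1 + ?a ^ k) ^ card (S \<times> ids M c) - 1 \<le> 2 * real (card M) powr (- b)"
    using params S a by (intro one_plus_power_minus_one_le_powr) auto
  moreover have "measure_pmf.prob (random_hashes M c S L k) {hs. \<not> good_family M c S L l k hs}
      \<le> (1 + ?a ^ k) ^ card (S \<times> ids M c) - 1"
    using assms(4,7) a(2)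
      bad_fraction_le[OF assms(1-3,8,9) finite_SigmaI[OF assms(4) finite_ids] _ assms(7)]
    by (intro prob_not_good_family_le) auto
  ultimately show ?thesis
    using measure_pmf.prob_compl[of "{hs. \<not> good_family M c S L l k hs}"
        "random_hashes M c S L k"]
    by (simp add: Compl_eq_Diff_UNIV[symmetric] Collect_neg_eq[symmetric])
qed

end
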